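(* Let $G$ be a graph, $\ell\ge 1$, and let $B\subseteq V(G)$ be an $(\ell-1)$-leaky forcing set of $G$. If $L$ is a set of $k\ge \ell$ specified leaks, then $|L-B^{[\infty]}_L|\le k-\ell$, where for $S\subseteq V(G)$, $L-S=\{x\to y\in L: x\notin S\}$.
   Context: All graphs are finite, simple and undirected. Zero forcing: a blue vertex $u$ with exactly one white neighbor $w$ may force $w$ (color it blue), written $u\to w$. A vertex leak is a vertex not allowed to perform any force; $B$ is an $\ell$-leaky forcing set if for every set of at most $\ell$ vertex leaks, exhaustively applying the forcing rule from initial blue set $B$ colors all of $V(G)$ blue (a $0$-leaky forcing set is a zero forcing set). A specified leak is an ordered pair $x\to y$ indicating that $x$ (the tail) is prohibited from forcing $y$ (the head). For a set $L$ of specified leaks, $B^{[\infty]}_L$ is the set of blue vertices obtained from $B$ after exhaustively applying the forcing rule while never performing a force in $L$ (independent of the order of forces). *)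

theory Defs
  imports Main
begin

definition simple_graph :: "'a set \<Rightarrow> ('a \<Rightarrow> 'a \<Rightarrow> bool) \<Rightarrow> bool" where
  "simple_graph V E \<longleftrightarrow> finite V \<and> (\<forall>x y. E x y \<longrightarrow> x \<in> V \<and> y \<in> V)
     \<and> (\<forall>x y. E x y \<longrightarrow> E y x) \<and> (\<forall>x. \<not> E x x)"

definition force_step ::
  "('a \<Rightarrow> 'a \<Rightarrow> bool) \<Rightarrow> ('a \<Rightarrow> 'a \<Rightarrow> bool) \<Rightarrow> 'a set \<Rightarrow> 'a set \<Rightarrow> bool" where
  "force_step E allowed S S' \<longleftrightarrow>
     (\<exists>u w. u \<in> S \<and> E u w \<and> w \<notin> S \<and> (\<forall>v. E u v \<and> v \<notin> S \<longrightarrow> v = w)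
        \<and> allowed u w \<and> S' = insert w S)"

text \<open>Final coloured set after exhaustively applying permitted forces
  (a terminal set reachable from B; it is independent of the order of forces).\<close>
definition final_blue ::
  "('a \<Rightarrow> 'a \<Rightarrow> bool) \<Rightarrow> ('a \<Rightarrow> 'a \<Rightarrow> bool) \<Rightarrow> 'a set \<Rightarrow> 'a set" where
  "final_blue E allowed B =
     (THE S. (force_step E allowed)\<^sup>*\<^sup>* B S \<and> \<not> (\<exists>S'. force_step E allowed S S'))"

definition closure_spec :: "('a \<Rightarrow> 'a \<Rightarrow> bool) \<Rightarrow> ('a \<times> 'a) set \<Rightarrow> 'a set \<Rightarrow> 'a set" where
  "closure_spec E L B = final_blue E (\<lambda>u w. (u, w) \<notin> L) B"

definition leaky_forcing_set :: "'a set \<Rightarrow> ('a \<Rightarrow> 'a \<Rightarrow> bool) \<Rightarrow> nat \<Rightarrow> 'a set \<Rightarrow> bool" where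
  "leaky_forcing_set V E l B \<longleftrightarrow> B \<subseteq> V \<and>
     (\<forall>X. X \<subseteq> V \<and> card X \<le> l \<longrightarrow> final_blue E (\<lambda>u w. u \<notin> X) B = V)"

definition leak_minus :: "('a \<times> 'a) set \<Rightarrow> 'a set \<Rightarrow> ('a \<times> 'a) set" where
  "leak_minus L S = {(x, y) \<in> L. x \<notin> S}"

end

theory Submission
  imports Defs
begin

text \<open>Let \<open>C = B\<^sup>[\<infinity>]\<^sub>L\<close> and let \<open>A\<close> be the leaks of \<open>L\<close> whose tail lies in \<open>C\<close>, so
  that \<open>|L - C| = k - |A|\<close>. If \<open>|A| \<ge> \<ell>\<close> we are done. Otherwise the tails of \<open>A\<close>
  form a set \<open>X\<close> of at most \<open>\<ell> - 1\<close> vertex leaks. Every force available from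
  \<open>C\<close> is a specified leak with tail in \<open>C\<close>, hence has its tail in \<open>X\<close>; so \<open>C\<close> is
  also stalled when the vertices of \<open>X\<close> are leaks. As \<open>B\<close> is \<open>(\<ell> - 1)\<close>-leaky,
  forcing with the vertex leaks \<open>X\<close> colours all of \<open>V\<close> and stays inside \<open>C\<close>; thus
  \<open>C = V\<close> and \<open>L - C\<close> is empty.\<close>

definition stalled :: "('a \<Rightarrow> 'a \<Rightarrow> bool) \<Rightarrow> ('a \<Rightarrow> 'a \<Rightarrow> bool) \<Rightarrow> 'a set \<Rightarrow> bool" where
  "stalled E allowed S \<longleftrightarrow> \<not> (\<exists>S'. force_step E allowed S S')"

lemma force_step_rtranclp_subset:
  assumes "(force_step E allowed)\<^sup>*\<^sup>* B T"
  shows "B \<subseteq> T"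
  using assms by induction (auto simp: force_step_def)

lemma force_step_rtranclp_subset_stalled:
  assumes "(force_step E allowed)\<^sup>*\<^sup>* B T" and "B \<subseteq> C" and "stalled E allowed C"
  shows "T \<subseteq> C"
  using assms(1)
proof induction
  case base
  show ?case using assms(2) .
next
  case (step T T')
  then obtain u w where uw: "u \<in> T" "E u w" "w \<notin> T" "\<forall>v. E u v \<and> v \<notin> T \<longrightarrow> v = w"
      "allowed u w" "T' = insert w T"
    unfolding force_step_def by blast
  show ?case
  proof (rule ccontr)
    assume "\<not> T' \<subseteq> C"
    with uw(6) step.IH have "w \<notin> C" by simp
    with uw step.IH have "force_step E allowed C (insert w C)"
      unfolding force_step_def by blast
    with assms(3) show False unfolding stalled_def by blast
  qed
qed

lemma force_step_rtranclp_stalled_exists: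
  assumes "finite V" and "\<And>x y. E x y \<Longrightarrow> y \<in> V"
    and "(force_step E allowed)\<^sup>*\<^sup>* B S"
  shows "\<exists>T. (force_step E allowed)\<^sup>*\<^sup>* B T \<and> stalled E allowed T"
  using assms(3)
proof (induction "card (V - S)" arbitrary: S rule: less_induct)
  case less
  show ?case
  proof (cases "stalled E allowed S")
    case True
    with less.prems show ?thesis by blast
  next
    case False
    then obtain S' where step: "force_step E allowed S S'"
      unfolding stalled_def by blast
    then obtain u w where "E u w" "w \<notin> S" "S' = insert w S"
      unfolding force_step_def by blast
    with assms(2) have "V - S' = (V - S) - {w}" and "w \<in> V - S" by auto
    with assms(1) have "card (V - S') < card (V - S)"
      using card_Diff1_less[of "V - S" w] by simp
    moreover have "(force_step E allowed)\<^sup>*\<^sup>* B S'"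
      using less.prems step by (rule rtranclp.rtrancl_into_rtrancl)
    ultimately show ?thesis by (rule less.hyps)
  qed
qed

lemma final_blue_reachable_stalled:
  assumes "simple_graph V E"
  shows "(force_step E allowed)\<^sup>*\<^sup>* B (final_blue E allowed B)"
    and "stalled E allowed (final_blue E allowed B)"
proof -
  let ?P = "\<lambda>S. (force_step E allowed)\<^sup>*\<^sup>* B S \<and> stalled E allowed S"
  obtain T where T: "?P T"
    using force_step_rtranclp_stalled_exists[of V E allowed B B] assms
    unfolding simple_graph_def by blast
  have "S = T" if S: "?P S" for S
  proof
    show "S \<subseteq> T"
      using S T force_step_rtranclp_subset[of E allowed B T]
        force_step_rtranclp_subset_stalled[of E allowed B S T] by blast
    show "T \<subseteq> S"
      using S T force_step_rtranclp_subset[of E allowed B S]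
        force_step_rtranclp_subset_stalled[of E allowed B T S] by blast
  qed
  with T have "?P (THE S. ?P S)"
    by (rule theI)
  moreover have "final_blue E allowed B = (THE S. ?P S)"
    unfolding final_blue_def stalled_def ..
  ultimately have "?P (final_blue E allowed B)"
    by simp
  then show "(force_step E allowed)\<^sup>*\<^sup>* B (final_blue E allowed B)"
    and "stalled E allowed (final_blue E allowed B)" by auto
qed

lemma subset_final_blue:
  assumes "simple_graph V E"
  shows "B \<subseteq> final_blue E allowed B"
  using final_blue_reachable_stalled(1)[OF assms] by (rule force_step_rtranclp_subset)

lemma final_blue_least_stalled:
  assumes "simple_graph V E" and "B \<subseteq> C" and "stalled E allowed C"
  shows "final_blue E allowed B \<subseteq> C"
  using final_blue_reachable_stalled(1)[OF assms(1)] assms(2,3)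
  by (rule force_step_rtranclp_subset_stalled)

lemma stalled_spec_imp_stalled_tails:
  assumes "stalled E (\<lambda>u w. (u, w) \<notin> L) C"
  shows "stalled E (\<lambda>u w. u \<notin> fst ` (L - leak_minus L C)) C"
  unfolding stalled_def
proof
  assume "\<exists>S'. force_step E (\<lambda>u w. u \<notin> fst ` (L - leak_minus L C)) C S'"
  then obtain u w where uw: "u \<in> C" "E u w" "w \<notin> C" "\<forall>v. E u v \<and> v \<notin> C \<longrightarrow> v = w"
      "u \<notin> fst ` (L - leak_minus L C)"
    unfolding force_step_def by blast
  have "(u, w) \<notin> L"
    using uw(1,5) unfolding leak_minus_def by force
  with uw(1-4) have "force_step E (\<lambda>u w. (u, w) \<notin> L) C (insert w C)"
    unfolding force_step_def by blast
  with assms show False unfolding stalled_def by blast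
qed

lemma leaky_forcing_set_subset_closure_spec:
  assumes "simple_graph V E" and "leaky_forcing_set V E m B" and "L \<subseteq> V \<times> V"
    and "card (fst ` (L - leak_minus L (closure_spec E L B))) \<le> m"
  shows "V \<subseteq> closure_spec E L B"
proof -
  define C where "C = closure_spec E L B"
  define X where "X = fst ` (L - leak_minus L C)"
  have "X \<subseteq> V" and "card X \<le> m"
    using assms(3,4) unfolding X_def C_def by auto
  with assms(2) have "final_blue E (\<lambda>u w. u \<notin> X) B = V"
    unfolding leaky_forcing_set_def by blast
  moreover have "final_blue E (\<lambda>u w. u \<notin> X) B \<subseteq> C"
  proof (rule final_blue_least_stalled[OF assms(1)])
    show "B \<subseteq> C"
      unfolding C_def closure_spec_def by (rule subset_final_blue[OF assms(1)])
    have "stalled E (\<lambda>u w. (u, w) \<notin> L) C"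
      unfolding C_def closure_spec_def by (rule final_blue_reachable_stalled(2)[OF assms(1)])
    then show "stalled E (\<lambda>u w. u \<notin> X) C"
      unfolding X_def by (rule stalled_spec_imp_stalled_tails)
  qed
  ultimately show ?thesis unfolding C_def by simp
qed

theorem proposition3p3:
  fixes V :: "'a set" and E :: "'a \<Rightarrow> 'a \<Rightarrow> bool" and B :: "'a set"
    and L :: "('a \<times> 'a) set" and l k :: nat
  assumes "simple_graph V E"
    and "l \<ge> 1"
    and "leaky_forcing_set V E (l - 1) B"
    and "L \<subseteq> V \<times> V"
    and "card L = k"
    and "k \<ge> l"
  shows "card (leak_minus L (closure_spec E L B)) \<le> k - l"
proof -
  define C where "C = closure_spec E L B"
  define A where "A = L - leak_minus L C"
  have "finite L"
    using assms(1,4) finite_subset unfolding simple_graph_def by blast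
  have "leak_minus L C = L - A" and "A \<subseteq> L"
    unfolding A_def leak_minus_def by auto
  with \<open>finite L\<close> assms(5) have card_leak_minus: "card (leak_minus L C) = k - card A"
    by (simp add: card_Diff_subset finite_subset)
  show ?thesis
  proof (cases "card A \<ge> l")
    case True
    with card_leak_minus C_def show ?thesis by simp
  next
    case False
    with \<open>finite L\<close> \<open>A \<subseteq> L\<close> have "card (fst ` A) \<le> l - 1"
      using card_image_le[of A fst] finite_subset by fastforce
    with assms(1,3,4) have "V \<subseteq> C"
      unfolding A_def C_def by (rule leaky_forcing_set_subset_closure_spec)
    with assms(4) have "leak_minus L C = {}"
      unfolding leak_minus_def by auto
    then show ?thesis using C_def by simp
  qed
qed

end
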